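(* Let $\beta=(\pi_\ell)_{\ell=1}^L$ be a chainable architecture. The redundancy removal procedure applied to $\beta$ stops after finitely many iterations and returns an architecture $\beta'$ such that: (1) $\beta'$ is chainable and non-redundant, and either $\beta'=(\pi_1*\cdots*\pi_L)$ or $\beta'=(\pi_1*\cdots*\pi_{\ell_1},\ \pi_{\ell_1+1}*\cdots*\pi_{\ell_2},\ \dots,\ \pi_{\ell_p+1}*\cdots*\pi_L)$ for some indices $1\le\ell_1<\cdots<\ell_p<L$ with $p\in\{1,\dots,L-1\}$; (2) $\mathcal{B}^{\beta'}=\mathcal{B}^\beta$; (3) $\|\beta'\|_0\le\|\beta\|_0$.
   Context: A pattern is a tuple $\pi=(a,b,c,d)$ of positive integers; $\mathbf{S}_\pi:=\mathbf{I}_a\otimes\mathbf{1}_{b\times c}\otimes\mathbf{I}_d\in\{0,1\}^{abd\times acd}$. A $\pi$-factor is a complex $abd\times acd$ matrix with support contained in that of $\mathbf{S}_\pi$. Patterns $\pi_1=(a_1,b_1,c_1,d_1),\pi_2=(a_2,b_2,c_2,d_2)$ are chainable if $a_1c_1/a_2=b_2d_2/d_1=:r(\pi_1,\pi_2)$ is an integer, $a_1\mid a_2$, $d_2\mid d_1$; then $\pi_1*\pi_2:=(a_1,b_1d_1/d_2,a_2c_2/a_1,d_2)$. A chainable pair is redundant if $r(\pi_1,\pi_2)\ge\min(b_1,c_2)$. An architecture $\beta=(\pi_\ell)_{\ell=1}^L$ is a sequence of patterns with $a_\ell c_\ell d_\ell=a_{\ell+1}b_{\ell+1}d_{\ell+1}$;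 it is chainable if every consecutive pair is chainable (depth $1$: chainable by convention), and a chainable architecture is redundant if some consecutive pair $(\pi_\ell,\pi_{\ell+1})$ is redundant (depth $1$: non-redundant). $\pi_p*\cdots*\pi_q$ is the iterated product. $\mathcal{B}^\beta:=\{\mathbf{X}_1\cdots\mathbf{X}_L:\mathbf{X}_\ell\text{ a }\pi_\ell\text{-factor}\}$ and $\|\beta\|_0:=\sum_{\ell}a_\ell b_\ell c_\ell d_\ell$. The redundancy removal procedure: set $\beta'\leftarrow\beta$; while $\beta'=(\pi'_\ell)_{\ell=1}^{L'}$ is redundant, choose any $\ell$ such that $(\pi'_\ell,\pi'_{\ell+1})$ is redundant and replace $\beta'$ by $(\pi'_1,\dots,\pi'_{\ell-1},\pi'_\ell*\pi'_{\ell+1},\pi'_{\ell+2},\dots,\pi'_{L'})$; return $\beta'$. *)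

theory Defs
  imports "Jordan_Normal_Form.Matrix"
begin

type_synonym pattern = "nat \<times> nat \<times> nat \<times> nat"
type_synonym architecture = "pattern list"

definition valid_pattern :: "pattern \<Rightarrow> bool" where
  "valid_pattern \<pi> = (case \<pi> of (a,b,c,d) \<Rightarrow> a > 0 \<and> b > 0 \<and> c > 0 \<and> d > 0)"

definition kron :: "'a :: times mat \<Rightarrow> 'a mat \<Rightarrow> 'a mat" where
  "kron A B = mat (dim_row A * dim_row B) (dim_col A * dim_col B)
     (\<lambda>(i,j). A $$ (i div dim_row B, j div dim_col B) * B $$ (i mod dim_row B, j mod dim_col B))"

definition ones_mat :: "nat \<Rightarrow> nat \<Rightarrow> 'a :: one mat" where
  "ones_mat m n = mat m n (\<lambda>_. 1)"

definition S_pat :: "pattern \<Rightarrow> nat mat" where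
  "S_pat \<pi> = (case \<pi> of (a,b,c,d) \<Rightarrow> kron (kron (1\<^sub>m a) (ones_mat b c)) (1\<^sub>m d))"

definition is_factor :: "pattern \<Rightarrow> complex mat \<Rightarrow> bool" where
  "is_factor \<pi> X = (case \<pi> of (a,b,c,d) \<Rightarrow>
      X \<in> carrier_mat (a*b*d) (a*c*d) \<and>
      (\<forall>i < a*b*d. \<forall>j < a*c*d. S_pat \<pi> $$ (i,j) = 0 \<longrightarrow> X $$ (i,j) = 0))"

definition chainable_pair :: "pattern \<Rightarrow> pattern \<Rightarrow> bool" where
  "chainable_pair \<pi>1 \<pi>2 = (case \<pi>1 of (a1,b1,c1,d1) \<Rightarrow> case \<pi>2 of (a2,b2,c2,d2) \<Rightarrow>
      a2 dvd a1*c1 \<and> d1 dvd b2*d2 \<and> a1*c1 div a2 = b2*d2 div d1 \<and> a1 dvd a2 \<and> d2 dvd d1)"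

definition r_pair :: "pattern \<Rightarrow> pattern \<Rightarrow> nat" where
  "r_pair \<pi>1 \<pi>2 = (case \<pi>1 of (a1,b1,c1,d1) \<Rightarrow> case \<pi>2 of (a2,b2,c2,d2) \<Rightarrow> a1*c1 div a2)"

definition star :: "pattern \<Rightarrow> pattern \<Rightarrow> pattern" (infixl "\<star>" 70) where
  "\<pi>1 \<star> \<pi>2 = (case \<pi>1 of (a1,b1,c1,d1) \<Rightarrow> case \<pi>2 of (a2,b2,c2,d2) \<Rightarrow>
      (a1, b1*d1 div d2, a2*c2 div a1, d2))"

definition redundant_pair :: "pattern \<Rightarrow> pattern \<Rightarrow> bool" where
  "redundant_pair \<pi>1 \<pi>2 = (case \<pi>1 of (a1,b1,c1,d1) \<Rightarrow> case \<pi>2 of (a2,b2,c2,d2) \<Rightarrow>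
      chainable_pair \<pi>1 \<pi>2 \<and> r_pair \<pi>1 \<pi>2 \<ge> min b1 c2)"

definition is_architecture :: "architecture \<Rightarrow> bool" where
  "is_architecture \<beta> = (\<beta> \<noteq> [] \<and> (\<forall>\<pi> \<in> set \<beta>. valid_pattern \<pi>) \<and>
     (\<forall>l. Suc l < length \<beta> \<longrightarrow>
        (case \<beta>!l of (a,b,c,d) \<Rightarrow> a*c*d) = (case \<beta>!Suc l of (a,b,c,d) \<Rightarrow> a*b*d)))"

definition chainable_arch :: "architecture \<Rightarrow> bool" where
  "chainable_arch \<beta> = (\<forall>l. Suc l < length \<beta> \<longrightarrow> chainable_pair (\<beta>!l) (\<beta>!Suc l))"

definition redundant_arch :: "architecture \<Rightarrow> bool" where
  "redundant_arch \<beta> = (chainable_arch \<beta> \<and>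
     (\<exists>l. Suc l < length \<beta> \<and> redundant_pair (\<beta>!l) (\<beta>!Suc l)))"

text \<open>Iterated product pi_p * ... * pi_q (left-associated), here for the 0-based
  index range p..<q, i.e. patterns beta!p, ..., beta!(q-1).\<close>
definition iter_star :: "architecture \<Rightarrow> nat \<Rightarrow> nat \<Rightarrow> pattern" where
  "iter_star \<beta> p q = foldl (\<star>) (\<beta>!p) (map (\<lambda>i. \<beta>!i) [Suc p..<q])"

definition mat_prod_list :: "complex mat list \<Rightarrow> complex mat" where
  "mat_prod_list Xs = foldl (*) (hd Xs) (tl Xs)"

definition B_set :: "architecture \<Rightarrow> complex mat set" where
  "B_set \<beta> = {mat_prod_list Xs | Xs. length Xs = length \<beta> \<and>
                 (\<forall>l < length \<beta>. is_factor (\<beta>!l) (Xs!l))}"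

definition norm0 :: "architecture \<Rightarrow> nat" where
  "norm0 \<beta> = sum_list (map (\<lambda>(a,b,c,d). a*b*c*d) \<beta>)"

definition rr_step :: "architecture \<Rightarrow> architecture \<Rightarrow> bool" where
  "rr_step \<beta> \<beta>' = (redundant_arch \<beta> \<and>
     (\<exists>l. Suc l < length \<beta> \<and> redundant_pair (\<beta>!l) (\<beta>!Suc l) \<and>
        \<beta>' = take l \<beta> @ [(\<beta>!l) \<star> (\<beta>!Suc l)] @ drop (Suc (Suc l)) \<beta>))"

end

theory Submission
  imports Defs
begin

text \<open>
  A chainable pair has the shape \<open>\<pi>\<^sub>1 = (a, b, s r, d t)\<close>, \<open>\<pi>\<^sub>2 = (a s, t r, c, d)\<close> with
  \<open>r = r(\<pi>\<^sub>1, \<pi>\<^sub>2)\<close>, and then \<open>\<pi>\<^sub>1 * \<pi>\<^sub>2 = (a, b t, s c, d)\<close>. Reading indices in mixed radix,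
  a row \<open>i\<close> of a \<open>\<pi>\<^sub>1\<close>-factor and a column \<open>k\<close> of a \<open>\<pi>\<^sub>2\<close>-factor are linked by exactly \<open>r\<close>
  middle indices, one per free digit \<open>\<rho> < r\<close>. So every product is a \<open>\<pi>\<^sub>1 * \<pi>\<^sub>2\<close>-factor,
  and if \<open>r \<ge> min b c\<close> the \<open>b\<close>-digit of the row (or the \<open>c\<close>-digit of the column) fits into
  that free digit, so every \<open>\<pi>\<^sub>1 * \<pi>\<^sub>2\<close>-factor is a 0/1 routing matrix times a matrix
  carrying its entries. Merging a redundant pair therefore keeps \<open>B_set\<close>, and
  \<open>b c \<le> r (b + c)\<close> shows that it does not increase \<open>norm0\<close>.

  Each step shortens the architecture, which gives termination. Chainability yields
  the divisibilities under which \<open>\<pi>\<^sub>p * \<dots> * \<pi>\<^sub>q = \<pi>\<^sub>p * \<pi>\<^sub>q\<close>; with this, merging two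
  adjacent blocks of a coarsening of \<open>\<beta>\<close> gives again a coarsening, and coarsenings are
  chainable architectures.
\<close>

section \<open>Products of factors of a chainable pair\<close>

lemma S_pat_nonzero_iff:
  assumes "i < a*b*d" "j < a*c*d"
  shows "S_pat (a,b,c,d) $$ (i,j) \<noteq> 0 \<longleftrightarrow> i div (b*d) = j div (c*d) \<and> i mod d = j mod d"
proof -
  have "i div d < a*b" "j div d < a*c"
    using assms by (simp_all add: less_mult_imp_div_less)
  then have "i div d div b < a" "j div d div c < a"
    by (simp_all add: less_mult_imp_div_less)
  moreover have "0 < b" "0 < c" "0 < d"
    using assms by (auto intro: gr0I)
  ultimately have "S_pat (a,b,c,d) $$ (i,j) \<noteq> 0 \<longleftrightarrow> i div d div b = j div d div c \<and> i mod d = j mod d"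
    using assms \<open>i div d < a*b\<close> \<open>j div d < a*c\<close>
    by (simp add: S_pat_def kron_def ones_mat_def)
  moreover have "i div (b*d) = i div d div b" "j div (c*d) = j div d div c"
    by (metis div_mult2_eq mult.commute)+
  ultimately show ?thesis
    by simp
qed

lemma is_factor_iff:
  "is_factor (a,b,c,d) X \<longleftrightarrow> X \<in> carrier_mat (a*b*d) (a*c*d) \<and>
     (\<forall>i < a*b*d. \<forall>j < a*c*d. X $$ (i,j) \<noteq> 0 \<longrightarrow> i div (b*d) = j div (c*d) \<and> i mod d = j mod d)"
  unfolding is_factor_def prod.case using S_pat_nonzero_iff by blast

lemma is_factorI:
  assumes "X \<in> carrier_mat (a*b*d) (a*c*d)"
    and "\<And>i j. i < a*b*d \<Longrightarrow> j < a*c*d \<Longrightarrow> X $$ (i,j) \<noteq> 0 \<Longrightarrow>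
           i div (b*d) = j div (c*d) \<and> i mod d = j mod d"
  shows "is_factor (a,b,c,d) X"
  using assms unfolding is_factor_iff by blast

lemma mixed_radix_less:
  fixes x y :: nat
  assumes "x < m" "y < n"
  shows "x * n + y < m * n"
proof -
  have "x * n + y < Suc x * n" using assms(2) by simp
  also have "\<dots> \<le> m * n" using assms(1) by (intro mult_le_mono1) simp
  finally show ?thesis .
qed

text \<open>
  A row index of an \<open>(a, b, c, d)\<close>-factor is \<open>(\<alpha> b + \<beta>) d + \<delta>\<close> with \<open>\<alpha> < a\<close>, \<open>\<beta> < b\<close>,
  \<open>\<delta> < d\<close>. The middle indices that can link row \<open>i\<close> of an \<open>(a, b, s r, d t)\<close>-factor with
  column \<open>k\<close> of an \<open>(a s, t r, c, d)\<close>-factor take the \<open>a s\<close>-block of \<open>k\<close>, the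
  \<open>d t\<close>-digit of \<open>i\<close>, and a free digit \<open>\<rho> < r\<close>.
\<close>

lemma middle_index:
  fixes i k \<rho> :: nat
  assumes i: "i < a*b*(d*t)" and k: "k < a*s*c*d" and \<rho>: "\<rho> < r"
  defines "j \<equiv> (k div (c*d) * r + \<rho>) * (d*t) + i mod (d*t)"
  shows "j < a*(s*r)*(d*t)" and "j div (d*t) mod r = \<rho>" and "j div (t*r*d) = k div (c*d)"
    and "j div (s*r*(d*t)) = k div (s*c*d)" and "j mod (d*t) = i mod (d*t)" and "j mod d = i mod d"
proof -
  have "0 < d*t" using i by (intro gr0I) simp
  then have j_div: "j div (d*t) = k div (c*d) * r + \<rho>" and j_mod: "j mod (d*t) = i mod (d*t)"
    unfolding j_def by simp_all
  have "k div (c*d) < a*s" using k by (simp add: less_mult_imp_div_less mult.assoc)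
  then have "k div (c*d) * r + \<rho> < a*s*r" using \<rho> by (rule mixed_radix_less)
  then have "j < a*s*r*(d*t)"
    unfolding j_def by (rule mixed_radix_less) (rule mod_less_divisor[OF \<open>0 < d*t\<close>])
  then show "j < a*(s*r)*(d*t)" by (simp add: mult.assoc)
  show "j div (d*t) mod r = \<rho>" using j_div \<rho> by simp
  have j_div_r: "j div (d*t) div r = k div (c*d)" using j_div \<rho> by simp
  moreover have "j div (t*r*d) = j div (d*t) div r"
    by (simp only: div_mult2_eq[symmetric]) (simp add: ac_simps)
  ultimately show "j div (t*r*d) = k div (c*d)" by simp
  have "j div (s*r*(d*t)) = j div (d*t) div r div s"
    by (simp only: div_mult2_eq[symmetric]) (simp add: ac_simps)
  also have "\<dots> = k div (c*d) div s" using j_div_r by simp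
  also have "\<dots> = k div (s*c*d)"
    by (simp only: div_mult2_eq[symmetric]) (simp add: ac_simps)
  finally show "j div (s*r*(d*t)) = k div (s*c*d)" .
  show "j mod (d*t) = i mod (d*t)" by (fact j_mod)
  then show "j mod d = i mod d" by (metis mod_mod_cancel dvd_triv_left)
qed

lemma factor_mult_index:
  fixes X1 X2 :: "complex mat"
  assumes X1: "is_factor (a,b,s*r,d*t) X1" and X2: "is_factor (a*s,t*r,c,d) X2"
    and i: "i < a*b*(d*t)" and k: "k < a*s*c*d"
  shows "(X1 * X2) $$ (i,k) = (\<Sum>\<rho><r.
           X1 $$ (i, (k div (c*d) * r + \<rho>) * (d*t) + i mod (d*t)) *
           X2 $$ ((k div (c*d) * r + \<rho>) * (d*t) + i mod (d*t), k))"
proof -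
  define n where "n = a*(s*r)*(d*t)"
  define J where "J \<rho> = (k div (c*d) * r + \<rho>) * (d*t) + i mod (d*t)" for \<rho>
  define f where "f j = X1 $$ (i,j) * X2 $$ (j,k)" for j
  have n_eq: "a*s*(t*r)*d = a*(s*r)*(d*t)" by (simp add: ac_simps)
  have c1: "X1 \<in> carrier_mat (a*b*(d*t)) n" and c2: "X2 \<in> carrier_mat n (a*s*c*d)"
    and supp1: "\<And>j. j < n \<Longrightarrow> X1 $$ (i,j) \<noteq> 0 \<Longrightarrow> i mod (d*t) = j mod (d*t)"
    and supp2: "\<And>j. j < n \<Longrightarrow> X2 $$ (j,k) \<noteq> 0 \<Longrightarrow> j div (t*r*d) = k div (c*d)"
    using X1 X2 i k unfolding is_factor_iff n_eq by (auto simp: n_def)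
  have J_range: "J ` {..<r} \<subseteq> {..<n}"
    using middle_index(1)[OF i k] unfolding J_def n_def by auto
  have "inj_on J {..<r}"
    by (rule inj_on_inverseI[where g = "\<lambda>j. j div (d*t) mod r"])
      (use middle_index(2)[OF i k] in \<open>simp add: J_def\<close>)
  have f_supp: "j \<in> J ` {..<r}" if "j < n" "f j \<noteq> 0" for j
  proof -
    have "j mod (d*t) = i mod (d*t)" "j div (t*r*d) = k div (c*d)"
      using supp1[of j] supp2[of j] that unfolding f_def by auto
    moreover have "j div (t*r*d) = j div (d*t) div r"
      by (simp only: div_mult2_eq[symmetric]) (simp add: ac_simps)
    ultimately have "j = J (j div (d*t) mod r)"
      unfolding J_def by (metis div_mult_mod_eq)
    moreover have "0 < r" using \<open>j < n\<close> unfolding n_def by (intro gr0I) simp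
    ultimately show ?thesis by simp
  qed
  have "(X1 * X2) $$ (i,k) = (\<Sum>j<n. f j)"
    using c1 c2 i k by (simp add: f_def scalar_prod_def lessThan_atLeast0)
  also have "\<dots> = (\<Sum>j\<in>J ` {..<r}. f j)"
    using J_range f_supp by (intro sum.mono_neutral_right) auto
  also have "\<dots> = (\<Sum>\<rho><r. f (J \<rho>))"
    using \<open>inj_on J {..<r}\<close> by (simp add: sum.reindex)
  finally show ?thesis unfolding f_def J_def .
qed

lemma factor_mult:
  fixes X1 X2 :: "complex mat"
  assumes X1: "is_factor (a,b,s*r,d*t) X1" and X2: "is_factor (a*s,t*r,c,d) X2"
  shows "is_factor (a, b*t, s*c, d) (X1 * X2)"
proof (rule is_factorI)
  have rows: "a*(b*t)*d = a*b*(d*t)" and cols: "a*(s*c)*d = a*s*c*d"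
    and mid: "a*s*(t*r)*d = a*(s*r)*(d*t)" by (simp_all add: ac_simps)
  have "X1 \<in> carrier_mat (a*b*(d*t)) (a*(s*r)*(d*t))" "X2 \<in> carrier_mat (a*(s*r)*(d*t)) (a*s*c*d)"
    using X1 X2 unfolding is_factor_iff mid by auto
  then show "X1 * X2 \<in> carrier_mat (a*(b*t)*d) (a*(s*c)*d)"
    unfolding rows cols by (rule mult_carrier_mat)
  fix i k assume "i < a*(b*t)*d" "k < a*(s*c)*d" and nz: "(X1 * X2) $$ (i,k) \<noteq> 0"
  then have i: "i < a*b*(d*t)" and k: "k < a*s*c*d" unfolding rows cols by simp_all
  define J where "J \<rho> = (k div (c*d) * r + \<rho>) * (d*t) + i mod (d*t)" for \<rho>
  obtain \<rho> where \<rho>: "\<rho> < r" and "X1 $$ (i, J \<rho>) * X2 $$ (J \<rho>, k) \<noteq> 0"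
    using nz unfolding factor_mult_index[OF X1 X2 i k] J_def[symmetric]
    by (metis (no_types, lifting) lessThan_iff sum.neutral)
  moreover have "J \<rho> < a*(s*r)*(d*t)"
    using middle_index(1)[OF i k \<rho>] unfolding J_def .
  ultimately have "i div (b*(d*t)) = J \<rho> div (s*r*(d*t))" "J \<rho> mod d = k mod d"
    using X1 X2 i k unfolding is_factor_iff mid by auto
  moreover have "b*t*d = b*(d*t)" by (simp add: ac_simps)
  ultimately show "i div (b*t*d) = k div (s*c*d) \<and> i mod d = k mod d"
    using middle_index(4,6)[OF i k \<rho>] unfolding J_def by metis
qed

lemma mixed_radix_decomp:
  fixes x :: nat
  shows "x = (x div (b*m) * b + x div m mod b) * m + x mod m"
  by (metis div_mult2_eq div_mult_mod_eq mult.commute)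

text \<open>
  For \<open>b \<le> r\<close>, \<open>X1\<close> copies the \<open>b\<close>-digit of the row into the free digit of the middle
  index and \<open>X2\<close> carries the entries of \<open>Y\<close>; for \<open>c \<le> r\<close> the roles are swapped.
\<close>

lemma factor_decomp_if_b_le:
  fixes Y :: "complex mat"
  assumes Y: "is_factor (a, b*t, s*c, d) Y" and "b \<le> r"
  shows "\<exists>X1 X2. is_factor (a,b,s*r,d*t) X1 \<and> is_factor (a*s,t*r,c,d) X2 \<and> Y = X1 * X2"
proof -
  define X1 :: "complex mat" where "X1 = mat (a*b*(d*t)) (a*(s*r)*(d*t)) (\<lambda>(i,j).
     if i div (b*(d*t)) = j div (s*r*(d*t)) \<and> i mod (d*t) = j mod (d*t)
       \<and> j div (d*t) mod r = i div (d*t) mod b then 1 else 0)"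
  define X2 :: "complex mat" where "X2 = mat (a*s*(t*r)*d) (a*s*c*d) (\<lambda>(j,k).
     if j div (t*r*d) = k div (c*d) \<and> j mod d = k mod d \<and> j div (d*t) mod r < b
     then Y $$ ((j div (s*r*(d*t)) * b + j div (d*t) mod r) * (d*t) + j mod (d*t), k) else 0)"
  have X1: "is_factor (a,b,s*r,d*t) X1"
    by (rule is_factorI) (auto simp: X1_def split: if_splits)
  have X2: "is_factor (a*s,t*r,c,d) X2"
    by (rule is_factorI) (auto simp: X2_def split: if_splits)
  have rows: "a*(b*t)*d = a*b*(d*t)" and cols: "a*(s*c)*d = a*s*c*d" and btd: "b*t*d = b*(d*t)"
    and mid: "a*s*(t*r)*d = a*(s*r)*(d*t)"
    by (simp_all add: ac_simps)
  have cY: "Y \<in> carrier_mat (a*b*(d*t)) (a*s*c*d)"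
    and supp: "\<And>i k. i < a*b*(d*t) \<Longrightarrow> k < a*s*c*d \<Longrightarrow> Y $$ (i,k) \<noteq> 0 \<Longrightarrow>
                 i div (b*(d*t)) = k div (s*c*d) \<and> i mod d = k mod d"
    using Y unfolding is_factor_iff rows cols btd by auto
  have "Y = X1 * X2"
  proof (rule eq_matI)
    fix i k assume "i < dim_row (X1 * X2)" "k < dim_col (X1 * X2)"
    then have i: "i < a*b*(d*t)" and k: "k < a*s*c*d" by (simp_all add: X1_def X2_def)
    define \<beta> where "\<beta> = i div (d*t) mod b"
    define J where "J \<rho> = (k div (c*d) * r + \<rho>) * (d*t) + i mod (d*t)" for \<rho>
    have "0 < b" using i by (intro gr0I) simp
    then have "\<beta> < b" unfolding \<beta>_def by simp
    then have \<beta>: "\<beta> < r" using \<open>b \<le> r\<close> by simp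
    have "(X1 * X2) $$ (i,k) = (\<Sum>\<rho><r. X1 $$ (i, J \<rho>) * X2 $$ (J \<rho>, k))"
      unfolding J_def by (rule factor_mult_index[OF X1 X2 i k])
    also have "\<dots> = (\<Sum>\<rho>\<in>{\<beta>}. X1 $$ (i, J \<rho>) * X2 $$ (J \<rho>, k))"
      using i \<beta> middle_index(1,2)[OF i k, where r = r]
      by (intro sum.mono_neutral_right) (auto simp: X1_def J_def \<beta>_def)
    also have "\<dots> = (if i div (b*(d*t)) = k div (s*c*d) \<and> i mod d = k mod d then Y $$ (i,k) else 0)"
      using i k middle_index[OF i k \<beta>] \<open>\<beta> < b\<close> mixed_radix_decomp[of i b "d*t", symmetric]
      by (auto simp: X1_def X2_def J_def mid \<beta>_def[symmetric])
    also have "\<dots> = Y $$ (i,k)"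
      using supp[OF i k] by auto
    finally show "Y $$ (i,k) = (X1 * X2) $$ (i,k)" ..
  qed (use cY in \<open>simp_all add: X1_def X2_def\<close>)
  with X1 X2 show ?thesis by blast
qed

lemma factor_decomp_if_c_le:
  fixes Y :: "complex mat"
  assumes Y: "is_factor (a, b*t, s*c, d) Y" and "c \<le> r"
  shows "\<exists>X1 X2. is_factor (a,b,s*r,d*t) X1 \<and> is_factor (a*s,t*r,c,d) X2 \<and> Y = X1 * X2"
proof -
  define X1 :: "complex mat" where "X1 = mat (a*b*(d*t)) (a*(s*r)*(d*t)) (\<lambda>(i,j).
     if i div (b*(d*t)) = j div (s*r*(d*t)) \<and> i mod (d*t) = j mod (d*t) \<and> j div (d*t) mod r < c
     then Y $$ (i, (j div (t*r*d) * c + j div (d*t) mod r) * d + j mod d) else 0)"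
  define X2 :: "complex mat" where "X2 = mat (a*s*(t*r)*d) (a*s*c*d) (\<lambda>(j,k).
     if j div (t*r*d) = k div (c*d) \<and> j mod d = k mod d
       \<and> j div (d*t) mod r = k div d mod c then 1 else 0)"
  have X1: "is_factor (a,b,s*r,d*t) X1"
    by (rule is_factorI) (auto simp: X1_def split: if_splits)
  have X2: "is_factor (a*s,t*r,c,d) X2"
    by (rule is_factorI) (auto simp: X2_def split: if_splits)
  have rows: "a*(b*t)*d = a*b*(d*t)" and cols: "a*(s*c)*d = a*s*c*d" and btd: "b*t*d = b*(d*t)"
    and mid: "a*s*(t*r)*d = a*(s*r)*(d*t)"
    by (simp_all add: ac_simps)
  have cY: "Y \<in> carrier_mat (a*b*(d*t)) (a*s*c*d)"
    and supp: "\<And>i k. i < a*b*(d*t) \<Longrightarrow> k < a*s*c*d \<Longrightarrow> Y $$ (i,k) \<noteq> 0 \<Longrightarrow>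
                 i div (b*(d*t)) = k div (s*c*d) \<and> i mod d = k mod d"
    using Y unfolding is_factor_iff rows cols btd by auto
  have "Y = X1 * X2"
  proof (rule eq_matI)
    fix i k assume "i < dim_row (X1 * X2)" "k < dim_col (X1 * X2)"
    then have i: "i < a*b*(d*t)" and k: "k < a*s*c*d" by (simp_all add: X1_def X2_def)
    define \<gamma> where "\<gamma> = k div d mod c"
    define J where "J \<rho> = (k div (c*d) * r + \<rho>) * (d*t) + i mod (d*t)" for \<rho>
    have "0 < c" using k by (intro gr0I) simp
    then have "\<gamma> < c" unfolding \<gamma>_def by simp
    then have \<gamma>: "\<gamma> < r" using \<open>c \<le> r\<close> by simp
    have "(X1 * X2) $$ (i,k) = (\<Sum>\<rho><r. X1 $$ (i, J \<rho>) * X2 $$ (J \<rho>, k))"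
      unfolding J_def by (rule factor_mult_index[OF X1 X2 i k])
    also have "\<dots> = (\<Sum>\<rho>\<in>{\<gamma>}. X1 $$ (i, J \<rho>) * X2 $$ (J \<rho>, k))"
      using k \<gamma> middle_index(1,2)[OF i k, where r = r]
      by (intro sum.mono_neutral_right) (auto simp: X2_def J_def mid \<gamma>_def)
    also have "\<dots> = (if i div (b*(d*t)) = k div (s*c*d) \<and> i mod d = k mod d then Y $$ (i,k) else 0)"
      using i k middle_index[OF i k \<gamma>] \<open>\<gamma> < c\<close> mixed_radix_decomp[of k c d, symmetric]
      by (auto simp: X1_def X2_def J_def mid \<gamma>_def[symmetric])
    also have "\<dots> = Y $$ (i,k)"
      using supp[OF i k] by auto
    finally show "Y $$ (i,k) = (X1 * X2) $$ (i,k)" ..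
  qed (use cY in \<open>simp_all add: X1_def X2_def\<close>)
  with X1 X2 show ?thesis by blast
qed

section \<open>Merging a redundant pair\<close>

lemma chainable_pairE:
  assumes "chainable_pair p q" and "valid_pattern p" and "valid_pattern q"
  obtains a b c d s t r where "p = (a, b, s*r, d*t)" and "q = (a*s, t*r, c, d)"
    and "r_pair p q = r" and "p \<star> q = (a, b*t, s*c, d)"
proof -
  obtain a1 b1 c1 d1 a2 b2 c2 d2 where p: "p = (a1,b1,c1,d1)" and q: "q = (a2,b2,c2,d2)"
    by (cases p, cases q) auto
  have pos: "0 < a1" "0 < d2" "0 < a2" "0 < d1"
    using assms(2,3) unfolding p q valid_pattern_def by auto
  have ch: "a2 dvd a1*c1" "d1 dvd b2*d2" "a1*c1 div a2 = b2*d2 div d1" "a1 dvd a2" "d2 dvd d1"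
    using assms(1) unfolding p q chainable_pair_def by auto
  obtain s where s: "a2 = a1*s" using ch(4) by blast
  obtain t where t: "d1 = d2*t" using ch(5) by blast
  define r where "r = a1*c1 div a2"
  have "a1*c1 = a2*r" using ch(1) unfolding r_def by simp
  then have c1: "c1 = s*r" using pos s by (simp add: mult.assoc)
  have "b2*d2 = d2*(t*r)" using ch(2,3) t unfolding r_def by (metis dvd_div_mult_self mult.assoc mult.commute)
  then have b2: "b2 = t*r" using pos by simp
  have "p \<star> q = (a1, b1*t, s*c2, d2)"
    unfolding p q star_def s t using pos by simp
  moreover have "r_pair p q = r" unfolding p q r_pair_def r_def by simp
  ultimately show thesis
    using that[of a1 b1 s r d2 t c2] p q s t c1 b2 by blast
qed

lemma redundant_pairE:
  assumes "redundant_pair p q" and "valid_pattern p" and "valid_pattern q"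
  obtains a b c d s t r where "p = (a, b, s*r, d*t)" and "q = (a*s, t*r, c, d)"
    and "p \<star> q = (a, b*t, s*c, d)" and "b \<le> r \<or> c \<le> r"
proof -
  have "chainable_pair p q"
    using assms(1) unfolding redundant_pair_def by (auto split: prod.splits)
  then obtain a b c d s t r where "p = (a, b, s*r, d*t)" and "q = (a*s, t*r, c, d)"
    and "r_pair p q = r" and "p \<star> q = (a, b*t, s*c, d)"
    using assms(2,3) by (rule chainable_pairE)
  moreover from calculation have "b \<le> r \<or> c \<le> r"
    using assms(1) unfolding redundant_pair_def by auto
  ultimately show thesis using that by blast
qed

lemma is_factor_star_iff:
  assumes "redundant_pair p q" and "valid_pattern p" and "valid_pattern q"
  shows "is_factor (p \<star> q) Y \<longleftrightarrow> (\<exists>X1 X2. is_factor p X1 \<and> is_factor q X2 \<and> Y = X1 * X2)"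
proof -
  obtain a b c d s t r where "p = (a, b, s*r, d*t)" and "q = (a*s, t*r, c, d)"
    and "p \<star> q = (a, b*t, s*c, d)" and "b \<le> r \<or> c \<le> r"
    using assms by (rule redundant_pairE)
  then show ?thesis
    using factor_mult factor_decomp_if_b_le factor_decomp_if_c_le by auto
qed

lemma norm0_append [simp]: "norm0 (xs @ ys) = norm0 xs + norm0 ys"
  by (simp add: norm0_def)

lemma norm0_star_le:
  assumes "redundant_pair p q" and "valid_pattern p" and "valid_pattern q"
  shows "norm0 [p \<star> q] \<le> norm0 [p, q]"
proof -
  obtain a b c d s t r where p: "p = (a, b, s*r, d*t)" and q: "q = (a*s, t*r, c, d)"
    and pq: "p \<star> q = (a, b*t, s*c, d)" and "b \<le> r \<or> c \<le> r"
    using assms by (rule redundant_pairE)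
  then have "b*c \<le> b*r + r*c" by (auto intro: trans_le_add1 trans_le_add2)
  then have "(a*s*t*d) * (b*c) \<le> (a*s*t*d) * (b*r + r*c)" by (rule mult_le_mono2)
  then show ?thesis unfolding pq unfolding p q norm0_def by (simp add: algebra_simps)
qed

definition pat_rows :: "pattern \<Rightarrow> nat" where
  "pat_rows \<pi> = (case \<pi> of (a,b,c,d) \<Rightarrow> a*b*d)"

definition pat_cols :: "pattern \<Rightarrow> nat" where
  "pat_cols \<pi> = (case \<pi> of (a,b,c,d) \<Rightarrow> a*c*d)"

lemma is_factor_carrier: "is_factor \<pi> X \<Longrightarrow> X \<in> carrier_mat (pat_rows \<pi>) (pat_cols \<pi>)"
  unfolding is_factor_def pat_rows_def pat_cols_def by (auto split: prod.splits)

lemma is_architecture_cols_rows: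
  "is_architecture \<beta> \<Longrightarrow> Suc l < length \<beta> \<Longrightarrow> pat_cols (\<beta>!l) = pat_rows (\<beta>!Suc l)"
  unfolding is_architecture_def pat_rows_def pat_cols_def by auto

lemma is_architecture_valid: "is_architecture \<beta> \<Longrightarrow> i < length \<beta> \<Longrightarrow> valid_pattern (\<beta>!i)"
  unfolding is_architecture_def by simp

lemma B_set_conv_list_all2: "B_set \<beta> = {mat_prod_list Xs | Xs. list_all2 is_factor \<beta> Xs}"
  unfolding B_set_def list_all2_conv_all_nth by auto

lemma mat_prod_list_append: "Xs \<noteq> [] \<Longrightarrow> mat_prod_list (Xs @ Ys) = foldl (*) (mat_prod_list Xs) Ys"
  by (cases Xs) (simp_all add: mat_prod_list_def)

lemma dim_col_foldl_times: "dim_col (foldl (*) A Xs) = dim_col (last (A # Xs))"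
  by (induction Xs arbitrary: A) auto

lemma dim_col_mat_prod_list:
  assumes "list_all2 is_factor \<beta> Xs" and "\<beta> \<noteq> []"
  shows "dim_col (mat_prod_list Xs) = pat_cols (last \<beta>)"
proof -
  have "Xs \<noteq> []" using assms by auto
  then have "is_factor (last \<beta>) (last Xs)"
    using assms by (auto simp: list_all2_conv_all_nth last_conv_nth)
  then have "dim_col (last Xs) = pat_cols (last \<beta>)"
    using is_factor_carrier by blast
  moreover have "dim_col (mat_prod_list Xs) = dim_col (last Xs)"
    using \<open>Xs \<noteq> []\<close> by (cases Xs) (simp_all add: mat_prod_list_def dim_col_foldl_times)
  ultimately show ?thesis by simp
qed

lemma mat_prod_list_merge:
  assumes "Us = [] \<or> dim_col (mat_prod_list Us) = dim_row X1" and "dim_col X1 = dim_row X2"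
  shows "mat_prod_list (Us @ [X1 * X2] @ Vs) = mat_prod_list (Us @ [X1, X2] @ Vs)"
proof (cases "Us = []")
  case True
  then show ?thesis by (simp add: mat_prod_list_def)
next
  case False
  let ?P = "mat_prod_list Us"
  have "?P * (X1 * X2) = ?P * X1 * X2"
    using assms False by (intro assoc_mult_mat[symmetric, of _ "dim_row ?P" "dim_col ?P" _ "dim_col X1" _ "dim_col X2"]) auto
  then show ?thesis using False by (simp add: mat_prod_list_append)
qed

lemma B_set_merge:
  assumes arch: "is_architecture (xs @ [p, q] @ ys)" and red: "redundant_pair p q"
  shows "B_set (xs @ [p \<star> q] @ ys) = B_set (xs @ [p, q] @ ys)"
proof -
  have valid: "valid_pattern p" "valid_pattern q"
    using arch unfolding is_architecture_def by auto
  have "pat_cols p = pat_rows q"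
    using is_architecture_cols_rows[OF arch, of "length xs"] by (simp add: nth_append)
  moreover have "pat_cols (last xs) = pat_rows p" if "xs \<noteq> []"
    using is_architecture_cols_rows[OF arch, of "length xs - 1"] that
    by (simp add: nth_append last_conv_nth)
  ultimately have merge: "mat_prod_list (Us @ [X1 * X2] @ Vs) = mat_prod_list (Us @ [X1, X2] @ Vs)"
    if "list_all2 is_factor xs Us" "is_factor p X1" "is_factor q X2" for Us X1 X2 Vs
    using that dim_col_mat_prod_list[OF that(1)] is_factor_carrier[OF that(2)] is_factor_carrier[OF that(3)]
    by (intro mat_prod_list_merge) auto
  show ?thesis
  proof (intro equalityI subsetI)
    fix M assume "M \<in> B_set (xs @ [p \<star> q] @ ys)"
    then obtain Us Y Vs where "M = mat_prod_list (Us @ [Y] @ Vs)" and "is_factor (p \<star> q) Y"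
      and "list_all2 is_factor xs Us" "list_all2 is_factor ys Vs"
      by (auto simp: B_set_conv_list_all2 list_all2_append1 list_all2_Cons1)
    moreover obtain X1 X2 where "is_factor p X1" "is_factor q X2" "Y = X1 * X2"
      using \<open>is_factor (p \<star> q) Y\<close> is_factor_star_iff[OF red valid] by blast
    ultimately have "M = mat_prod_list (Us @ [X1, X2] @ Vs)"
      and "list_all2 is_factor (xs @ [p, q] @ ys) (Us @ [X1, X2] @ Vs)"
      using merge by (simp_all add: list_all2_appendI)
    then show "M \<in> B_set (xs @ [p, q] @ ys)"
      unfolding B_set_conv_list_all2 by blast
  next
    fix M assume "M \<in> B_set (xs @ [p, q] @ ys)"
    then obtain Us X1 X2 Vs where "M = mat_prod_list (Us @ [X1, X2] @ Vs)"
      and "is_factor p X1" "is_factor q X2" "list_all2 is_factor xs Us" "list_all2 is_factor ys Vs"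
      by (auto simp: B_set_conv_list_all2 list_all2_append1 list_all2_Cons1)
    moreover have "is_factor (p \<star> q) (X1 * X2)"
      using calculation is_factor_star_iff[OF red valid] by blast
    ultimately have "M = mat_prod_list (Us @ [X1 * X2] @ Vs)"
      and "list_all2 is_factor (xs @ [p \<star> q] @ ys) (Us @ [X1 * X2] @ Vs)"
      using merge by (simp_all add: list_all2_appendI)
    then show "M \<in> B_set (xs @ [p \<star> q] @ ys)"
      unfolding B_set_conv_list_all2 by blast
  qed
qed

lemma rr_stepE:
  assumes "rr_step \<beta> \<beta>'"
  obtains l where "Suc l < length \<beta>" and "redundant_pair (\<beta>!l) (\<beta>!Suc l)"
    and "\<beta> = take l \<beta> @ [\<beta>!l, \<beta>!Suc l] @ drop (Suc (Suc l)) \<beta>"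
    and "\<beta>' = take l \<beta> @ [\<beta>!l \<star> \<beta>!Suc l] @ drop (Suc (Suc l)) \<beta>"
  using assms unfolding rr_step_def by (auto simp: Cons_nth_drop_Suc)

lemma length_rr_step: "rr_step \<beta> \<beta>' \<Longrightarrow> length \<beta>' < length \<beta>"
  by (erule rr_stepE) auto

lemma rr_step_terminates: "\<nexists>f. \<forall>n. rr_step (f n) (f (Suc n))"
proof -
  have "wf {(\<beta>', \<beta>). rr_step \<beta> \<beta>'}"
    using length_rr_step by (intro wf_subset[OF wf_measure[of length]]) auto
  then show ?thesis unfolding wf_iff_no_infinite_down_chain by simp
qed

lemma B_set_rr_step:
  assumes "is_architecture \<beta>" and "rr_step \<beta> \<beta>'"
  shows "B_set \<beta>' = B_set \<beta>"
  using assms(2)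
proof (rule rr_stepE)
  fix l assume "redundant_pair (\<beta>!l) (\<beta>!Suc l)"
    and "\<beta> = take l \<beta> @ [\<beta>!l, \<beta>!Suc l] @ drop (Suc (Suc l)) \<beta>"
    and "\<beta>' = take l \<beta> @ [\<beta>!l \<star> \<beta>!Suc l] @ drop (Suc (Suc l)) \<beta>"
  then show ?thesis
    using B_set_merge assms(1) by metis
qed

lemma norm0_rr_step:
  assumes "is_architecture \<beta>" and "rr_step \<beta> \<beta>'"
  shows "norm0 \<beta>' \<le> norm0 \<beta>"
  using assms(2)
proof (rule rr_stepE)
  fix l assume l: "Suc l < length \<beta>" and red: "redundant_pair (\<beta>!l) (\<beta>!Suc l)"
    and \<beta>: "\<beta> = take l \<beta> @ [\<beta>!l, \<beta>!Suc l] @ drop (Suc (Suc l)) \<beta>"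
    and \<beta>': "\<beta>' = take l \<beta> @ [\<beta>!l \<star> \<beta>!Suc l] @ drop (Suc (Suc l)) \<beta>"
  have "valid_pattern (\<beta>!l)" "valid_pattern (\<beta>!Suc l)"
    using is_architecture_valid[OF assms(1)] l by auto
  then have "norm0 [\<beta>!l \<star> \<beta>!Suc l] \<le> norm0 [\<beta>!l, \<beta>!Suc l]"
    using red by (intro norm0_star_le)
  moreover have "norm0 \<beta> = norm0 (take l \<beta>) + norm0 [\<beta>!l, \<beta>!Suc l] + norm0 (drop (Suc (Suc l)) \<beta>)"
    using arg_cong[OF \<beta>, of norm0] by (simp only: norm0_append)
  ultimately show ?thesis
    unfolding \<beta>' norm0_append by linarith
qed

section \<open>Iterated products\<close>

fun pat_a :: "pattern \<Rightarrow> nat" where "pat_a (a,b,c,d) = a"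
fun pat_b :: "pattern \<Rightarrow> nat" where "pat_b (a,b,c,d) = b"
fun pat_c :: "pattern \<Rightarrow> nat" where "pat_c (a,b,c,d) = c"
fun pat_d :: "pattern \<Rightarrow> nat" where "pat_d (a,b,c,d) = d"

lemma pattern_eqI:
  "pat_a x = pat_a y \<Longrightarrow> pat_b x = pat_b y \<Longrightarrow> pat_c x = pat_c y \<Longrightarrow> pat_d x = pat_d y \<Longrightarrow> x = y"
  by (cases x, cases y) simp

lemma valid_pattern_iff: "valid_pattern \<pi> \<longleftrightarrow> 0 < pat_a \<pi> \<and> 0 < pat_b \<pi> \<and> 0 < pat_c \<pi> \<and> 0 < pat_d \<pi>"
  by (cases \<pi>) (simp add: valid_pattern_def)

lemma chainable_pair_iff: "chainable_pair x y \<longleftrightarrow>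
    pat_a y dvd pat_a x * pat_c x \<and> pat_d x dvd pat_b y * pat_d y \<and>
    pat_a x * pat_c x div pat_a y = pat_b y * pat_d y div pat_d x \<and>
    pat_a x dvd pat_a y \<and> pat_d y dvd pat_d x"
  by (cases x, cases y) (simp add: chainable_pair_def)

lemma pat_rows_conv: "pat_rows \<pi> = pat_a \<pi> * pat_b \<pi> * pat_d \<pi>"
  and pat_cols_conv: "pat_cols \<pi> = pat_a \<pi> * pat_c \<pi> * pat_d \<pi>"
  by (cases \<pi>, simp add: pat_rows_def pat_cols_def)+

lemma pat_star [simp]:
  "pat_a (x \<star> y) = pat_a x" "pat_b (x \<star> y) = pat_b x * pat_d x div pat_d y"
  "pat_c (x \<star> y) = pat_a y * pat_c y div pat_a x" "pat_d (x \<star> y) = pat_d y"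
  by (cases x, cases y, simp add: star_def)+

lemma star_self: "valid_pattern x \<Longrightarrow> x \<star> x = x"
  by (rule pattern_eqI) (simp_all add: valid_pattern_iff)

lemma star_absorb_left: "pat_d y dvd pat_b x * pat_d x \<Longrightarrow> (x \<star> y) \<star> z = x \<star> z"
  by (rule pattern_eqI) simp_all

lemma star_absorb_right: "pat_a y dvd pat_a z * pat_c z \<Longrightarrow> x \<star> (y \<star> z) = x \<star> z"
  by (rule pattern_eqI) simp_all

lemma valid_pattern_star:
  assumes "valid_pattern x" "valid_pattern y" "pat_a x dvd pat_a y" "pat_d y dvd pat_d x"
  shows "valid_pattern (x \<star> y)"
proof -
  have "pat_d y \<le> pat_b x * pat_d x"
    using assms by (auto simp: valid_pattern_iff intro!: dvd_imp_le dvd_mult)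
  moreover have "pat_a x \<le> pat_a y * pat_c y"
    using assms by (auto simp: valid_pattern_iff intro!: dvd_imp_le dvd_mult2)
  ultimately show ?thesis
    using assms(1,2) by (simp add: valid_pattern_iff div_greater_zero_iff)
qed

lemma pat_rows_star: "pat_d y dvd pat_d x \<Longrightarrow> pat_rows (x \<star> y) = pat_rows x"
  by (simp add: pat_rows_conv mult.assoc)

lemma pat_cols_star: "pat_a x dvd pat_a y \<Longrightarrow> pat_cols (x \<star> y) = pat_cols y"
  by (simp add: pat_cols_conv)

lemma chainable_pair_star:
  assumes "chainable_pair y z" and "pat_a x dvd pat_a y" and "pat_d w dvd pat_d z"
  shows "chainable_pair (x \<star> y) (z \<star> w)"
  using assms unfolding chainable_pair_iff by (auto intro: dvd_trans)

lemma is_architecture_iff: "is_architecture \<beta> \<longleftrightarrow> \<beta> \<noteq> [] \<and> (\<forall>\<pi>\<in>set \<beta>. valid_pattern \<pi>) \<and>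
    (\<forall>l. Suc l < length \<beta> \<longrightarrow> pat_cols (\<beta>!l) = pat_rows (\<beta>!Suc l))"
  unfolding is_architecture_def pat_rows_def pat_cols_def ..

lemma chainable_arch_dvd:
  assumes "chainable_arch \<beta>" and "p \<le> q" and "q < length \<beta>"
  shows "pat_a (\<beta>!p) dvd pat_a (\<beta>!q) \<and> pat_d (\<beta>!q) dvd pat_d (\<beta>!p)"
  using assms(2,3)
proof (induction q rule: dec_induct)
  case (step q)
  then have "chainable_pair (\<beta>!q) (\<beta>!Suc q)"
    using assms(1) unfolding chainable_arch_def by simp
  then show ?case
    using step unfolding chainable_pair_iff by (auto intro: dvd_trans)
qed simp

lemma iter_star_conv_star:
  assumes "chainable_arch \<beta>" and "valid_pattern (\<beta>!p)" and "p < q" and "q \<le> length \<beta>"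
  shows "iter_star \<beta> p q = \<beta>!p \<star> \<beta>!(q - 1)"
proof -
  from \<open>p < q\<close> have "Suc p \<le> q" by simp
  then show ?thesis
  proof (induction rule: dec_induct)
    case base
    show ?case using assms(2) by (simp add: iter_star_def star_self)
  next
    case (step n)
    have "iter_star \<beta> p (Suc n) = iter_star \<beta> p n \<star> \<beta>!n"
      using step(1) by (simp add: iter_star_def)
    also have "\<dots> = (\<beta>!p \<star> \<beta>!(n - 1)) \<star> \<beta>!n"
      using step(3) by simp
    also have "\<dots> = \<beta>!p \<star> \<beta>!n"
      using chainable_arch_dvd[OF assms(1), of p "n - 1"] step(1,2) assms(4)
      by (intro star_absorb_left) simp
    finally show ?case by simp
  qed
qed

lemma iter_star_merge:
  assumes "chainable_arch \<beta>" and "valid_pattern (\<beta>!p)" and "valid_pattern (\<beta>!q)"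
    and "p < q" and "q < r" and "r \<le> length \<beta>"
  shows "iter_star \<beta> p q \<star> iter_star \<beta> q r = iter_star \<beta> p r"
proof -
  have "pat_d (\<beta>!(q - 1)) dvd pat_b (\<beta>!p) * pat_d (\<beta>!p)"
    using chainable_arch_dvd[OF assms(1), of p "q - 1"] assms(4-6) by simp
  moreover have "pat_a (\<beta>!q) dvd pat_a (\<beta>!(r - 1)) * pat_c (\<beta>!(r - 1))"
    using chainable_arch_dvd[OF assms(1), of q "r - 1"] assms(4-6) by simp
  ultimately show ?thesis
    using assms by (simp add: iter_star_conv_star star_absorb_left star_absorb_right)
qed

section \<open>Coarsenings of a chainable architecture\<close>

text \<open>
  \<open>c = [\<ell>\<^sub>0, \<dots>, \<ell>\<^bsub>p+1\<^esub>]\<close> with \<open>0 = \<ell>\<^sub>0 < \<dots> < \<ell>\<^bsub>p+1\<^esub> = L\<close> lists the breakpoints; block \<open>k\<close>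
  of the coarsening is \<open>\<pi>\<^bsub>\<ell>\<^sub>k+1\<^esub> * \<dots> * \<pi>\<^bsub>\<ell>\<^bsub>k+1\<^esub>\<^esub>\<close>, written with 0-based indices.
\<close>

definition breakpoints :: "nat \<Rightarrow> nat list \<Rightarrow> bool" where
  "breakpoints L c \<longleftrightarrow> sorted_wrt (<) c \<and> 2 \<le> length c \<and> c!0 = 0 \<and> last c = L"

definition coarsening :: "architecture \<Rightarrow> nat list \<Rightarrow> architecture" where
  "coarsening \<beta> c = map (\<lambda>k. iter_star \<beta> (c!k) (c!Suc k)) [0..<length c - 1]"

lemma length_coarsening [simp]: "length (coarsening \<beta> c) = length c - 1"
  by (simp add: coarsening_def)

lemma nth_coarsening [simp]: "k < length c - 1 \<Longrightarrow> coarsening \<beta> c ! k = iter_star \<beta> (c!k) (c!Suc k)"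
  by (simp add: coarsening_def)

lemma breakpoints_nth:
  assumes "breakpoints L c" and "Suc k < length c"
  shows "c!k < c!Suc k" and "c!Suc k \<le> L"
proof -
  have sorted: "sorted_wrt (<) c" and "last c = L"
    using assms(1) unfolding breakpoints_def by auto
  then show "c!k < c!Suc k"
    using assms(2) by (simp add: sorted_wrt_iff_nth_less)
  have "c \<noteq> []" using assms(2) by auto
  then have "L = c!(length c - 1)"
    using \<open>last c = L\<close> by (simp add: last_conv_nth)
  then show "c!Suc k \<le> L"
    using sorted assms(2) by (cases "Suc k = length c - 1") (auto simp: sorted_wrt_iff_nth_less less_imp_le)
qed

lemma coarsening_finest:
  assumes "\<beta> \<noteq> []"
  shows "breakpoints (length \<beta>) [0..<Suc (length \<beta>)]" and "coarsening \<beta> [0..<Suc (length \<beta>)] = \<beta>"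
proof -
  show "breakpoints (length \<beta>) [0..<Suc (length \<beta>)]"
    using assms unfolding breakpoints_def by (simp add: sorted_wrt_iff_nth_less Suc_le_eq del: upt_Suc)
  show "coarsening \<beta> [0..<Suc (length \<beta>)] = \<beta>"
    by (rule nth_equalityI) (simp_all add: iter_star_def del: upt_Suc)
qed

lemma coarsening_nth_conv_star:
  assumes "is_architecture \<beta>" and "chainable_arch \<beta>" and bp: "breakpoints (length \<beta>) c"
    and "Suc k < length c"
  shows "coarsening \<beta> c ! k = \<beta>!(c!k) \<star> \<beta>!(c!Suc k - 1)"
  using breakpoints_nth[OF bp assms(4)] assms
  by (simp add: iter_star_conv_star is_architecture_valid)

lemma coarsening_chainable_architecture:
  assumes arch: "is_architecture \<beta>" and chain: "chainable_arch \<beta>"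
    and bp: "breakpoints (length \<beta>) c"
  shows "is_architecture (coarsening \<beta> c) \<and> chainable_arch (coarsening \<beta> c)"
proof -
  note piece = coarsening_nth_conv_star[OF arch chain bp]
  have dvd: "pat_a (\<beta>!(c!k)) dvd pat_a (\<beta>!(c!Suc k - 1))"
      "pat_d (\<beta>!(c!Suc k - 1)) dvd pat_d (\<beta>!(c!k))"
    if "Suc k < length c" for k
    using breakpoints_nth[OF bp that] chainable_arch_dvd[OF chain, of "c!k" "c!Suc k - 1"] by simp_all
  have valid_piece: "valid_pattern (coarsening \<beta> c ! k)" if "Suc k < length c" for k
  proof -
    have "c!k < length \<beta>" "c!Suc k - 1 < length \<beta>"
      using breakpoints_nth[OF bp that] by auto
    then show ?thesis
      unfolding piece[OF that] using dvd[OF that]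
      by (auto intro!: valid_pattern_star is_architecture_valid[OF arch])
  qed
  have adjacent: "pat_cols (coarsening \<beta> c ! k) = pat_rows (coarsening \<beta> c ! Suc k)
      \<and> chainable_pair (coarsening \<beta> c ! k) (coarsening \<beta> c ! Suc k)"
    if k: "Suc (Suc k) < length c" for k
  proof -
    have "Suc (c!Suc k - 1) = c!Suc k" "c!Suc k < length \<beta>"
      using breakpoints_nth[OF bp, of k] breakpoints_nth[OF bp, of "Suc k"] k by auto
    then have "chainable_pair (\<beta>!(c!Suc k - 1)) (\<beta>!(c!Suc k))"
      and "pat_cols (\<beta>!(c!Suc k - 1)) = pat_rows (\<beta>!(c!Suc k))"
      using chain is_architecture_cols_rows[OF arch, of "c!Suc k - 1"] unfolding chainable_arch_def
      by metis+
    then show ?thesis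
      using k piece[of k] piece[of "Suc k"] dvd[of k] dvd[of "Suc k"]
      by (simp add: pat_rows_star pat_cols_star chainable_pair_star)
  qed
  have "coarsening \<beta> c \<noteq> []"
    using bp unfolding breakpoints_def by (auto simp flip: length_greater_0_conv)
  moreover have "valid_pattern \<pi>" if \<pi>: "\<pi> \<in> set (coarsening \<beta> c)" for \<pi>
  proof -
    obtain k where "k < length c - 1" and "\<pi> = coarsening \<beta> c ! k"
      using \<pi> by (metis in_set_conv_nth length_coarsening)
    then show ?thesis using valid_piece[of k] by simp
  qed
  ultimately show ?thesis
    using adjacent unfolding is_architecture_iff chainable_arch_def by auto
qed

lemma nth_take_Suc_append_drop:
  assumes "Suc l < length xs" and "i < length xs - 1"
  shows "(take (Suc l) xs @ drop (Suc (Suc l)) xs) ! i = xs ! (if i \<le> l then i else Suc i)"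
  using assms by (auto simp: nth_append min_def)

lemma breakpoints_delete:
  assumes bp: "breakpoints L c" and l: "Suc (Suc l) < length c"
  shows "breakpoints L (take (Suc l) c @ drop (Suc (Suc l)) c)"
  unfolding breakpoints_def
proof (intro conjI)
  let ?c' = "take (Suc l) c @ drop (Suc (Suc l)) c"
  have len: "length ?c' = length c - 1" using l by simp
  have sorted: "sorted_wrt (<) c" and "c!0 = 0" and "last c = L"
    using bp unfolding breakpoints_def by auto
  then show "sorted_wrt (<) ?c'"
    using l unfolding sorted_wrt_iff_nth_less len by (auto simp: nth_take_Suc_append_drop)
  show "2 \<le> length ?c'" using len l by simp
  show "?c'!0 = 0" using \<open>c!0 = 0\<close> l by (simp add: nth_take_Suc_append_drop)
  show "last ?c' = L" using \<open>last c = L\<close> l by simp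
qed

lemma coarsening_rr_step:
  assumes arch: "is_architecture \<beta>" and chain: "chainable_arch \<beta>"
    and bp: "breakpoints (length \<beta>) c" and step: "rr_step (coarsening \<beta> c) \<beta>''"
  shows "\<exists>c'. breakpoints (length \<beta>) c' \<and> \<beta>'' = coarsening \<beta> c'"
proof -
  let ?\<beta>' = "coarsening \<beta> c"
  obtain l where l: "Suc l < length ?\<beta>'"
    and \<beta>'': "\<beta>'' = take l ?\<beta>' @ [?\<beta>'!l \<star> ?\<beta>'!Suc l] @ drop (Suc (Suc l)) ?\<beta>'"
    using step by (blast elim: rr_stepE)
  then have l_c: "Suc (Suc l) < length c" by simp
  \<comment> \<open>merging blocks \<open>l\<close> and \<open>l+1\<close> deletes the breakpoint \<open>c!Suc l\<close>\<close>
  define c' where "c' = take (Suc l) c @ drop (Suc (Suc l)) c"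
  have len': "length c' = length c - 1" unfolding c'_def using l_c by simp
  have nth': "c'!i = c!(if i \<le> l then i else Suc i)" if "i < length c - 1" for i
    unfolding c'_def using that l_c by (simp add: nth_take_Suc_append_drop)
  have "\<beta>'' = coarsening \<beta> c'"
  proof (rule nth_equalityI)
    show "length \<beta>'' = length (coarsening \<beta> c')" using \<beta>'' l len' by simp
    fix k assume "k < length \<beta>''"
    then have k: "Suc (Suc k) < length c" using \<beta>'' l by simp
    have "\<beta>''!k = (if k < l then ?\<beta>'!k else if k = l then ?\<beta>'!l \<star> ?\<beta>'!Suc l else ?\<beta>'!Suc k)"
      using \<beta>'' k l by (auto simp: nth_append min_def)
    also have "\<dots> = iter_star \<beta> (c'!k) (c'!Suc k)"
    proof -
      have "iter_star \<beta> (c!l) (c!Suc l) \<star> iter_star \<beta> (c!Suc l) (c!Suc (Suc l))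
          = iter_star \<beta> (c!l) (c!Suc (Suc l))"
        using breakpoints_nth[OF bp, of l] breakpoints_nth[OF bp, of "Suc l"] l_c
        by (intro iter_star_merge chain is_architecture_valid[OF arch]) auto
      then show ?thesis using k l_c by (simp add: nth')
    qed
    finally show "\<beta>''!k = coarsening \<beta> c' ! k" using k len' by simp
  qed
  moreover have "breakpoints (length \<beta>) c'"
    unfolding c'_def using bp l_c by (rule breakpoints_delete)
  ultimately show ?thesis by blast
qed

lemma rtranclp_rr_step_invariants:
  assumes arch: "is_architecture \<beta>" and chain: "chainable_arch \<beta>" and "rr_step\<^sup>*\<^sup>* \<beta> \<beta>'"
  shows "(\<exists>c. breakpoints (length \<beta>) c \<and> \<beta>' = coarsening \<beta> c)
    \<and> B_set \<beta>' = B_set \<beta> \<and> norm0 \<beta>' \<le> norm0 \<beta>"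
  using assms(3)
proof (induction rule: rtranclp_induct)
  case base
  have "\<beta> \<noteq> []" using arch unfolding is_architecture_def by simp
  then have "breakpoints (length \<beta>) [0..<Suc (length \<beta>)] \<and> \<beta> = coarsening \<beta> [0..<Suc (length \<beta>)]"
    using coarsening_finest by simp
  then show ?case by blast
next
  case (step \<beta>' \<beta>'')
  then obtain c where bp: "breakpoints (length \<beta>) c" and \<beta>': "\<beta>' = coarsening \<beta> c" by blast
  then have "is_architecture \<beta>'" using coarsening_chainable_architecture[OF arch chain] by blast
  then have "B_set \<beta>'' = B_set \<beta>'" and "norm0 \<beta>'' \<le> norm0 \<beta>'"
    using B_set_rr_step norm0_rr_step step(2) by blast+
  moreover have "\<exists>c'. breakpoints (length \<beta>) c' \<and> \<beta>'' = coarsening \<beta> c'"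
    using coarsening_rr_step[OF arch chain bp] step(2) unfolding \<beta>' .
  ultimately show ?case using step(3) by simp
qed

theorem proposition4p15:
  fixes \<beta> :: architecture
  assumes "is_architecture \<beta>" and "chainable_arch \<beta>"
  shows "(\<nexists>f. f 0 = \<beta> \<and> (\<forall>n. rr_step (f n) (f (Suc n))))
    \<and> (\<forall>\<beta>'. rr_step\<^sup>*\<^sup>* \<beta> \<beta>' \<and> \<not> redundant_arch \<beta>' \<longrightarrow>
         chainable_arch \<beta>' \<and> \<not> redundant_arch \<beta>' \<and>
         (\<exists>c. sorted_wrt (<) c \<and> length c \<ge> 2 \<and> c!0 = 0 \<and> last c = length \<beta> \<and>
              \<beta>' = map (\<lambda>k. iter_star \<beta> (c!k) (c!Suc k)) [0..<length c - 1]) \<and>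
         B_set \<beta>' = B_set \<beta> \<and>
         norm0 \<beta>' \<le> norm0 \<beta>)"
proof -
  have reach: "chainable_arch \<beta>' \<and> (\<exists>c. breakpoints (length \<beta>) c \<and> \<beta>' = coarsening \<beta> c)
      \<and> B_set \<beta>' = B_set \<beta> \<and> norm0 \<beta>' \<le> norm0 \<beta>" if steps: "rr_step\<^sup>*\<^sup>* \<beta> \<beta>'" for \<beta>'
    using rtranclp_rr_step_invariants[OF assms steps] coarsening_chainable_architecture[OF assms]
    by blast
  have "\<nexists>f. f 0 = \<beta> \<and> (\<forall>n. rr_step (f n) (f (Suc n)))"
    using rr_step_terminates by blast
  then show ?thesis
    using reach unfolding breakpoints_def coarsening_def by blast
qed

end
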